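(* There is a constant $\breve C_1>0$, independent of $N$ (depending only on $\Omega$), such that for all $f,g\in\mathcal C_{\rm per}$, $$\|\Delta_h(fg)\|_2\le\breve C_1\big(\|f\|_2+\|\Delta_hf\|_2\big)\big(\|g\|_2+\|\Delta_hg\|_2\big),$$ where $fg$ denotes the pointwise product.
   Context: Grid setting: $\Omega=(0,1)^3$, $N$ a positive integer, $h=1/N$. $\mathcal C_{\rm per}$ is the space of complex-valued grid functions on the points $(ih,jh,kh)$, $N$-periodic in each index. Discrete inner product $\langle f,g\rangle=h^3\sum_{i,j,k=1}^N\overline{f_{i,j,k}}\,g_{i,j,k}$, $\|f\|_2=\langle f,f\rangle^{1/2}$. Forward differences $D_xf_{i+1/2,j,k}=(f_{i+1,j,k}-f_{i,j,k})/h$ (similarly $D_y,D_z$), and $\Delta_h=D_x^2+D_y^2+D_z^2$ is the standard 7-point discrete Laplacian, $(\Delta_hf)_{i,j,k}=h^{-2}(f_{i+1,j,k}+f_{i-1,j,k}+f_{i,j+1,k}+f_{i,j-1,k}+f_{i,j,k+1}+f_{i,j,k-1}-6f_{i,j,k})$. *)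

theory Defs
  imports "HOL-Analysis.Analysis"
begin

text \<open>Grid functions on the points (ih,jh,kh), indexed by integers (i,j,k),
  complex valued; membership in C_per is N-periodicity in each index.\<close>

type_synonym grid_fun = "int \<Rightarrow> int \<Rightarrow> int \<Rightarrow> complex"

definition grid_h :: "nat \<Rightarrow> real" where
  "grid_h N = 1 / real N"

definition per_grid :: "nat \<Rightarrow> grid_fun \<Rightarrow> bool" where
  "per_grid N f \<longleftrightarrow> (\<forall>i j k.
      f (i + int N) j k = f i j k \<and> f i (j + int N) k = f i j k \<and> f i j (k + int N) = f i j k)"

definition grid_inner :: "nat \<Rightarrow> grid_fun \<Rightarrow> grid_fun \<Rightarrow> complex" where
  "grid_inner N f g = complex_of_real (grid_h N ^ 3) *
     (\<Sum>i\<in>{1..int N}. \<Sum>j\<in>{1..int N}. \<Sum>k\<in>{1..int N}. cnj (f i j k) * g i j k)"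

definition grid_norm2 :: "nat \<Rightarrow> grid_fun \<Rightarrow> real" where
  "grid_norm2 N f = sqrt (Re (grid_inner N f f))"

definition lap_h :: "nat \<Rightarrow> grid_fun \<Rightarrow> grid_fun" where
  "lap_h N f = (\<lambda>i j k. complex_of_real (1 / grid_h N ^ 2) *
      (f (i+1) j k + f (i-1) j k + f i (j+1) k + f i (j-1) k + f i j (k+1) + f i j (k-1)
       - 6 * f i j k))"

end

theory Submission
  imports Defs
begin

(* Expand f and g in the plane waves E_k, k in {0..N-1}^3. By Parseval, ||.||_2 is the l^2 norm of
   the coefficients; Delta_h acts diagonally with eigenvalue -lambda_k, lambda_k >= 0; and the
   coefficients of fg are the cyclic convolution of those of f and g. Since
   lambda_m <= 2 lambda_k + 2 lambda_(m-k), Young's inequality bounds ||lambda (a * b)||_2 by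
   2 ||lambda a||_2 ||b||_1 + 2 ||a||_1 ||lambda b||_2, and Cauchy-Schwarz gives
   ||a||_1 <= B (||a||_2 + ||lambda a||_2) with B^2 = sum_k (1 + lambda_k)^-2. This B is bounded
   uniformly in N because lambda_k grows like |k|^2 (Jordan's inequality) and
   sum over Z^3 of (1 + |k|^2)^-2 is finite. *)

section \<open>Weighted convolution estimates\<close>

lemma sum_abs_le_L2_set_weighted:
  fixes w f :: "'a \<Rightarrow> real"
  assumes "\<And>k. k \<in> A \<Longrightarrow> 0 \<le> w k"
  shows "(\<Sum>k\<in>A. \<bar>f k\<bar>) \<le> L2_set (\<lambda>k. 1 / (1 + w k)) A * (L2_set f A + L2_set (\<lambda>k. w k * f k) A)"
proof -
  have "(\<Sum>k\<in>A. \<bar>f k\<bar>) = (\<Sum>k\<in>A. \<bar>1 / (1 + w k)\<bar> * \<bar>f k + w k * f k\<bar>)"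
  proof (rule sum.cong)
    fix k assume "k \<in> A"
    with assms have "0 < 1 + w k" by (simp add: add_pos_nonneg)
    moreover have "f k + w k * f k = (1 + w k) * f k"
      by (simp add: algebra_simps)
    ultimately show "\<bar>f k\<bar> = \<bar>1 / (1 + w k)\<bar> * \<bar>f k + w k * f k\<bar>"
      by (simp add: abs_mult)
  qed simp
  also have "\<dots> \<le> L2_set (\<lambda>k. 1 / (1 + w k)) A * L2_set (\<lambda>k. f k + w k * f k) A"
    by (rule L2_set_mult_ineq)
  also have "\<dots> \<le> L2_set (\<lambda>k. 1 / (1 + w k)) A * (L2_set f A + L2_set (\<lambda>k. w k * f k) A)"
    by (intro mult_left_mono L2_set_triangle_ineq L2_set_nonneg)
  finally show ?thesis .
qed

(* \<sigma> m k plays the role of m - k in a finite abelian group K. *)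
locale convolution_index =
  fixes K :: "'k set" and \<sigma> :: "'k \<Rightarrow> 'k \<Rightarrow> 'k"
  assumes reflect_in: "k \<in> K \<Longrightarrow> \<sigma> m k \<in> K"
    and reflect_reflect: "k \<in> K \<Longrightarrow> \<sigma> m (\<sigma> m k) = k"
    and bij_betw_reflect_left: "k \<in> K \<Longrightarrow> bij_betw (\<lambda>m. \<sigma> m k) K K"
begin

lemma bij_betw_reflect: "bij_betw (\<sigma> m) K K"
  by (rule bij_betw_byWitness[where f' = "\<sigma> m"]) (auto simp: reflect_in reflect_reflect)

lemma sum_reflect: "(\<Sum>k\<in>K. f (\<sigma> m k)) = sum f K"
  by (rule sum.reindex_bij_betw[OF bij_betw_reflect])

lemma sum_reflect_left: "k \<in> K \<Longrightarrow> (\<Sum>m\<in>K. f (\<sigma> m k)) = sum f K"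
  by (rule sum.reindex_bij_betw[OF bij_betw_reflect_left])

lemma convolution_commute:
  fixes X Y :: "'k \<Rightarrow> 'a::comm_semiring_0"
  shows "(\<Sum>k\<in>K. X k * Y (\<sigma> m k)) = (\<Sum>k\<in>K. Y k * X (\<sigma> m k))"
proof -
  have "(\<Sum>k\<in>K. X k * Y (\<sigma> m k)) = (\<Sum>k\<in>K. Y (\<sigma> m k) * X (\<sigma> m (\<sigma> m k)))"
    by (intro sum.cong) (simp_all add: reflect_reflect mult.commute)
  also have "\<dots> = (\<Sum>k\<in>K. Y k * X (\<sigma> m k))"
    by (rule sum_reflect)
  finally show ?thesis .
qed

lemma L2_set_convolution_le:
  fixes X Y :: "'k \<Rightarrow> real"
  assumes Y_nonneg: "\<And>k. k \<in> K \<Longrightarrow> 0 \<le> Y k"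
  shows "L2_set (\<lambda>m. \<Sum>k\<in>K. X k * Y (\<sigma> m k)) K \<le> L2_set X K * sum Y K"
proof -
  have Cauchy_Schwarz:
    "(\<Sum>k\<in>K. X k * Y (\<sigma> m k))\<^sup>2 \<le> (\<Sum>k\<in>K. (X k)\<^sup>2 * Y (\<sigma> m k)) * sum Y K" for m
  proof -
    have "(\<Sum>k\<in>K. X k * Y (\<sigma> m k)) = (\<Sum>k\<in>K. (X k * sqrt (Y (\<sigma> m k))) * sqrt (Y (\<sigma> m k)))"
      by (intro sum.cong) (simp_all add: Y_nonneg reflect_in mult.assoc)
    then have "(\<Sum>k\<in>K. X k * Y (\<sigma> m k))\<^sup>2
        \<le> (\<Sum>k\<in>K. (X k * sqrt (Y (\<sigma> m k)))\<^sup>2) * (\<Sum>k\<in>K. (sqrt (Y (\<sigma> m k)))\<^sup>2)"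
      by (simp only: Cauchy_Schwarz_ineq_sum)
    also have "\<dots> = (\<Sum>k\<in>K. (X k)\<^sup>2 * Y (\<sigma> m k)) * (\<Sum>k\<in>K. Y (\<sigma> m k))"
      by (intro arg_cong2[where f = "(*)"] sum.cong)
        (simp_all add: Y_nonneg reflect_in power_mult_distrib)
    finally show ?thesis by (simp only: sum_reflect)
  qed
  have "(\<Sum>m\<in>K. (\<Sum>k\<in>K. X k * Y (\<sigma> m k))\<^sup>2) \<le> (\<Sum>m\<in>K. (\<Sum>k\<in>K. (X k)\<^sup>2 * Y (\<sigma> m k)) * sum Y K)"
    by (intro sum_mono Cauchy_Schwarz)
  also have "\<dots> = (\<Sum>m\<in>K. \<Sum>k\<in>K. (X k)\<^sup>2 * Y (\<sigma> m k)) * sum Y K"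
    by (rule sum_distrib_right[symmetric])
  also have "\<dots> = (\<Sum>k\<in>K. (X k)\<^sup>2 * (\<Sum>m\<in>K. Y (\<sigma> m k))) * sum Y K"
    by (subst sum.swap) (simp add: sum_distrib_left)
  also have "\<dots> = (L2_set X K * sum Y K)\<^sup>2"
    by (simp add: sum_reflect_left L2_set_def power_mult_distrib sum_nonneg power2_eq_square
        flip: sum_distrib_right)
  finally show ?thesis
    unfolding L2_set_def[where f = "\<lambda>m. \<Sum>k\<in>K. X k * Y (\<sigma> m k)"]
    by (intro real_le_lsqrt) (simp_all add: Y_nonneg sum_nonneg)
qed

lemma L2_set_weighted_convolution_le:
  fixes a b :: "'k \<Rightarrow> 'a::real_normed_div_algebra" and w :: "'k \<Rightarrow> real"
  assumes w_nonneg: "\<And>k. k \<in> K \<Longrightarrow> 0 \<le> w k"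
    and w_reflect: "\<And>m k. m \<in> K \<Longrightarrow> k \<in> K \<Longrightarrow> w m \<le> 2 * w k + 2 * w (\<sigma> m k)"
  shows "L2_set (\<lambda>m. w m * norm (\<Sum>k\<in>K. a k * b (\<sigma> m k))) K
    \<le> 2 * L2_set (\<lambda>k. w k * norm (a k)) K * (\<Sum>k\<in>K. norm (b k))
     + 2 * L2_set (\<lambda>k. w k * norm (b k)) K * (\<Sum>k\<in>K. norm (a k))"
proof -
  define conv where "conv X Y m = (\<Sum>k\<in>K. X k * Y (\<sigma> m k))" for X Y :: "'k \<Rightarrow> real" and m
  define \<alpha> where "\<alpha> k = norm (a k)" for k
  define \<beta> where "\<beta> k = norm (b k)" for k
  have pointwise: "w m * norm (\<Sum>k\<in>K. a k * b (\<sigma> m k))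
      \<le> 2 * conv (\<lambda>k. w k * \<alpha> k) \<beta> m + 2 * conv (\<lambda>k. w k * \<beta> k) \<alpha> m" if m: "m \<in> K" for m
  proof -
    have "w m * norm (\<Sum>k\<in>K. a k * b (\<sigma> m k)) \<le> w m * (\<Sum>k\<in>K. \<alpha> k * \<beta> (\<sigma> m k))"
      unfolding \<alpha>_def \<beta>_def
      by (intro mult_left_mono w_nonneg m order_trans[OF norm_sum]) (simp add: norm_mult)
    also have "\<dots> \<le> (\<Sum>k\<in>K. \<alpha> k * \<beta> (\<sigma> m k) * (2 * w k + 2 * w (\<sigma> m k)))"
      unfolding sum_distrib_left
    proof (intro sum_mono)
      fix k assume k: "k \<in> K"
      show "w m * (\<alpha> k * \<beta> (\<sigma> m k)) \<le> \<alpha> k * \<beta> (\<sigma> m k) * (2 * w k + 2 * w (\<sigma> m k))"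
        using mult_left_mono[OF w_reflect[OF m k], of "\<alpha> k * \<beta> (\<sigma> m k)"]
        by (simp add: \<alpha>_def \<beta>_def mult.commute)
    qed
    also have "\<dots> = 2 * conv (\<lambda>k. w k * \<alpha> k) \<beta> m + 2 * conv \<alpha> (\<lambda>k. w k * \<beta> k) m"
      by (simp add: conv_def algebra_simps sum.distrib sum_distrib_left)
    also have "conv \<alpha> (\<lambda>k. w k * \<beta> k) m = conv (\<lambda>k. w k * \<beta> k) \<alpha> m"
      unfolding conv_def by (rule convolution_commute)
    finally show ?thesis .
  qed
  have "L2_set (\<lambda>m. w m * norm (\<Sum>k\<in>K. a k * b (\<sigma> m k))) K
      \<le> L2_set (\<lambda>m. 2 * conv (\<lambda>k. w k * \<alpha> k) \<beta> m + 2 * conv (\<lambda>k. w k * \<beta> k) \<alpha> m) K"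
    by (intro L2_set_mono pointwise) (auto intro: mult_nonneg_nonneg w_nonneg)
  also have "\<dots> \<le> 2 * L2_set (conv (\<lambda>k. w k * \<alpha> k) \<beta>) K + 2 * L2_set (conv (\<lambda>k. w k * \<beta> k) \<alpha>) K"
    by (rule order_trans[OF L2_set_triangle_ineq]) (simp add: L2_set_right_distrib)
  also have "\<dots> \<le> 2 * (L2_set (\<lambda>k. w k * \<alpha> k) K * sum \<beta> K) + 2 * (L2_set (\<lambda>k. w k * \<beta> k) K * sum \<alpha> K)"
    unfolding conv_def
    by (intro add_mono mult_left_mono L2_set_convolution_le) (simp_all add: \<alpha>_def \<beta>_def)
  finally show ?thesis by (simp add: \<alpha>_def \<beta>_def mult.assoc)
qed

lemma L2_set_weighted_convolution_le_product:
  fixes a b :: "'k \<Rightarrow> 'a::real_normed_div_algebra" and w :: "'k \<Rightarrow> real"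
  assumes w_nonneg: "\<And>k. k \<in> K \<Longrightarrow> 0 \<le> w k"
    and w_reflect: "\<And>m k. m \<in> K \<Longrightarrow> k \<in> K \<Longrightarrow> w m \<le> 2 * w k + 2 * w (\<sigma> m k)"
    and B: "L2_set (\<lambda>k. 1 / (1 + w k)) K \<le> B"
  shows "L2_set (\<lambda>m. w m * norm (\<Sum>k\<in>K. a k * b (\<sigma> m k))) K
    \<le> 4 * B * (L2_set (\<lambda>k. norm (a k)) K + L2_set (\<lambda>k. w k * norm (a k)) K)
            * (L2_set (\<lambda>k. norm (b k)) K + L2_set (\<lambda>k. w k * norm (b k)) K)"
proof -
  define x y u v where "x = L2_set (\<lambda>k. norm (a k)) K" and "y = L2_set (\<lambda>k. w k * norm (a k)) K"
    and "u = L2_set (\<lambda>k. norm (b k)) K" and "v = L2_set (\<lambda>k. w k * norm (b k)) K"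
  have nonneg: "0 \<le> x" "0 \<le> y" "0 \<le> u" "0 \<le> v" "0 \<le> B"
    using B order_trans[OF L2_set_nonneg] by (auto simp: x_def y_def u_def v_def)
  have l1: "(\<Sum>k\<in>K. norm (c k)) \<le> B * (L2_set (\<lambda>k. norm (c k)) K + L2_set (\<lambda>k. w k * norm (c k)) K)"
    for c :: "'k \<Rightarrow> 'a"
  proof -
    have "(\<Sum>k\<in>K. norm (c k))
        \<le> L2_set (\<lambda>k. 1 / (1 + w k)) K * (L2_set (\<lambda>k. norm (c k)) K + L2_set (\<lambda>k. w k * norm (c k)) K)"
      using sum_abs_le_L2_set_weighted[of K w "\<lambda>k. norm (c k)"] w_nonneg by simp
    also have "\<dots> \<le> B * (L2_set (\<lambda>k. norm (c k)) K + L2_set (\<lambda>k. w k * norm (c k)) K)"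
      by (intro mult_right_mono B add_nonneg_nonneg L2_set_nonneg)
    finally show ?thesis .
  qed
  have "L2_set (\<lambda>m. w m * norm (\<Sum>k\<in>K. a k * b (\<sigma> m k))) K
      \<le> 2 * y * (\<Sum>k\<in>K. norm (b k)) + 2 * v * (\<Sum>k\<in>K. norm (a k))"
    unfolding y_def v_def by (rule L2_set_weighted_convolution_le[OF w_nonneg w_reflect])
  also have "\<dots> \<le> 2 * y * (B * (u + v)) + 2 * v * (B * (x + y))"
    using nonneg l1[of a] l1[of b]
    by (intro add_mono mult_left_mono) (simp_all add: x_def y_def u_def v_def)
  also have "\<dots> \<le> 4 * B * (x + y) * (u + v)"
    using nonneg by (simp add: algebra_simps mult_nonneg_nonneg)
  finally show ?thesis by (simp add: x_def y_def u_def v_def)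
qed

end

section \<open>Discrete plane waves\<close>

definition wave :: "nat \<Rightarrow> int \<Rightarrow> int \<Rightarrow> complex" where
  "wave n j x = cis (2 * pi * of_int j * of_int x / real n)"

lemma wave_mult: "wave n j x * wave n l x = wave n (j + l) x"
  by (simp add: wave_def cis_mult add_divide_distrib algebra_simps)

lemma wave_mult_point: "wave n j x * wave n j y = wave n j (x + y)"
  by (simp add: wave_def cis_mult add_divide_distrib algebra_simps)

lemma wave_commute: "wave n j x = wave n x j"
  by (simp add: wave_def mult_ac)

lemma cnj_wave: "cnj (wave n j x) = wave n (- j) x"
  by (simp add: wave_def cis_cnj)

lemma wave_add_multiple:
  assumes "0 < n"
  shows "wave n (j + int n * q) x = wave n j x"
proof -
  have "2 * pi * of_int (j + int n * q) * of_int x / real n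
      = 2 * pi * of_int j * of_int x / real n + 2 * pi * of_int (q * x)"
    using assms by (simp add: field_simps)
  then show ?thesis
    by (simp add: wave_def flip: cis_mult)
qed

lemma wave_mod: "0 < n \<Longrightarrow> wave n (j mod int n) x = wave n j x"
  using wave_add_multiple[of n "j mod int n" "j div int n" x] by (simp add: mod_div_mult_eq)

lemma sum_wave:
  assumes n: "0 < n"
  shows "(\<Sum>x\<in>{a..a + int n - 1}. wave n j x) = (if int n dvd j then of_nat n else 0)"
proof (cases "int n dvd j")
  case True
  then obtain q where "j = int n * q" by blast
  then have "wave n j x = 1" for x
    using wave_add_multiple[OF n, of 0 q x] by (simp add: wave_def)
  with True show ?thesis by simp
next
  case False
  define z where "z = cis (2 * pi * of_int j / real n)"
  have interval: "{a..a + int n - 1} = (\<lambda>t. a + int t) ` {..<n}"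
  proof -
    have "x \<in> (\<lambda>t. a + int t) ` {..<n}" if "x \<in> {a..a + int n - 1}" for x
      using that by (intro image_eqI[of _ _ "nat (x - a)"]) auto
    then show ?thesis by auto
  qed
  have powers: "wave n j (a + int t) = wave n j a * z ^ t" for t
    unfolding wave_def z_def Complex.DeMoivre cis_mult
    by (rule arg_cong[where f = cis]) (simp add: add_divide_distrib algebra_simps)
  have "z ^ n = 1"
    using n by (simp add: z_def Complex.DeMoivre)
  moreover have "z \<noteq> 1"
  proof
    assume "z = 1"
    then have "cos (2 * pi * of_int j / real n) = 1"
      unfolding z_def by (metis cis.sel(1) one_complex.sel(1))
    then obtain m :: int where "2 * pi * of_int j / real n = of_int m * 2 * pi"
      by (auto simp: cos_one_2pi_int)
    then have "of_int j = real n * of_int m"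
      using n by (simp add: field_simps)
    then have "j = int n * m"
      by (metis of_int_eq_iff of_int_mult of_int_of_nat_eq)
    with False show False by auto
  qed
  ultimately have "(\<Sum>t<n. z ^ t) = 0"
    by (simp add: sum_gp_strict)
  then have "(\<Sum>x\<in>{a..a + int n - 1}. wave n j x) = 0"
    unfolding interval by (simp add: sum.reindex inj_on_def powers flip: sum_distrib_left)
  with False show ?thesis by simp
qed

fun plane_wave :: "nat \<Rightarrow> int \<times> int \<times> int \<Rightarrow> int \<times> int \<times> int \<Rightarrow> complex" where
  "plane_wave n (k1, k2, k3) (x1, x2, x3) = wave n k1 x1 * wave n k2 x2 * wave n k3 x3"

lemma plane_wave_commute: "plane_wave n k x = plane_wave n x k"
  by (cases k; cases x) (simp add: wave_commute)

lemma plane_wave_mult: "plane_wave n k x * plane_wave n l x = plane_wave n (k + l) x"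
  by (cases k; cases l; cases x) (simp flip: wave_mult add: mult_ac)

lemma cnj_plane_wave: "cnj (plane_wave n k x) = plane_wave n (- k) x"
  by (cases k; cases x) (simp add: cnj_wave)

lemma cnj_plane_wave_mult: "cnj (plane_wave n k x) * plane_wave n l x = plane_wave n (l - k) x"
  by (simp add: cnj_plane_wave plane_wave_mult add.commute[of "- k" l])

fun mod3 :: "nat \<Rightarrow> int \<times> int \<times> int \<Rightarrow> int \<times> int \<times> int" where
  "mod3 n (k1, k2, k3) = (k1 mod int n, k2 mod int n, k3 mod int n)"

abbreviation index_cube :: "nat \<Rightarrow> (int \<times> int \<times> int) set" where
  "index_cube n \<equiv> {0..int n - 1} \<times> {0..int n - 1} \<times> {0..int n - 1}"

lemma mod3_in_index_cube: "0 < n \<Longrightarrow> mod3 n k \<in> index_cube n"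
  by (cases k) (simp add: pos_mod_bound)

lemma mod3_eq_self: "k \<in> index_cube n \<Longrightarrow> mod3 n k = k"
  by auto

lemma plane_wave_mod3: "0 < n \<Longrightarrow> plane_wave n (mod3 n k) x = plane_wave n k x"
  by (cases k; cases x) (simp add: wave_mod)

lemma sum_product3:
  fixes f g h :: "'a \<Rightarrow> 'b::comm_semiring_0"
  shows "(\<Sum>(i, j, k)\<in>A \<times> B \<times> C. f i * g j * h k) = sum f A * sum g B * sum h C"
proof -
  have "(\<Sum>(i, j, k)\<in>A \<times> B \<times> C. f i * g j * h k) = (\<Sum>i\<in>A. \<Sum>j\<in>B. \<Sum>k\<in>C. f i * g j * h k)"
    by (simp add: sum.cartesian_product)
  also have "\<dots> = (\<Sum>i\<in>A. f i * (\<Sum>j\<in>B. g j * sum h C))"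
    by (simp add: sum_distrib_left mult.assoc)
  also have "\<dots> = sum f A * sum g B * sum h C"
    by (simp add: sum_distrib_right mult.assoc)
  finally show ?thesis .
qed

lemma sum_plane_wave_diff:
  assumes "0 < n"
  shows "(\<Sum>x\<in>{a..a + int n - 1} \<times> {a..a + int n - 1} \<times> {a..a + int n - 1}. plane_wave n (k - l) x)
    = (if mod3 n k = mod3 n l then of_nat n ^ 3 else 0)"
proof -
  obtain k1 k2 k3 l1 l2 l3 where kl: "k = (k1, k2, k3)" "l = (l1, l2, l3)"
    by (cases k; cases l)
  have "(\<Sum>x\<in>{a..a + int n - 1} \<times> {a..a + int n - 1} \<times> {a..a + int n - 1}. plane_wave n (k - l) x)
      = (\<Sum>(x1, x2, x3)\<in>{a..a + int n - 1} \<times> {a..a + int n - 1} \<times> {a..a + int n - 1}.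
          wave n (k1 - l1) x1 * wave n (k2 - l2) x2 * wave n (k3 - l3) x3)"
    by (intro sum.cong) (auto simp: kl)
  also have "\<dots> = (\<Sum>x\<in>{a..a + int n - 1}. wave n (k1 - l1) x) * (\<Sum>x\<in>{a..a + int n - 1}. wave n (k2 - l2) x)
        * (\<Sum>x\<in>{a..a + int n - 1}. wave n (k3 - l3) x)"
    by (rule sum_product3)
  finally show ?thesis
    by (simp add: sum_wave assms kl mod_eq_dvd_iff power3_eq_cube)
qed

section \<open>Fourier expansion of periodic grid functions\<close>

lemma convolution_index_mod3: "0 < n \<Longrightarrow> convolution_index (index_cube n) (\<lambda>m k. mod3 n (m - k))"
proof
  assume n: "0 < n"
  show "mod3 n (m - k) \<in> index_cube n" for m k
    using mod3_in_index_cube[OF n] .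
  show "mod3 n (m - mod3 n (m - k)) = k" if "k \<in> index_cube n" for m k
    using that by (cases m; cases k) (auto simp: mod_diff_right_eq)
  show "bij_betw (\<lambda>m. mod3 n (m - k)) (index_cube n) (index_cube n)" if "k \<in> index_cube n" for k
  proof (rule bij_betw_byWitness[where f' = "\<lambda>j. mod3 n (j + k)"])
    show "\<forall>m\<in>index_cube n. mod3 n (mod3 n (m - k) + k) = m"
      by (cases k) (auto simp: mod_add_left_eq)
    show "\<forall>j\<in>index_cube n. mod3 n (mod3 n (j + k) - k) = j"
      by (cases k) (auto simp: mod_diff_left_eq)
  qed (use mod3_in_index_cube[OF n] in blast)+
qed

lemma per_grid_mod:
  assumes "per_grid n f"
  shows "f (x1 mod int n) (x2 mod int n) (x3 mod int n) = f x1 x2 x3"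
proof -
  have periodic: "\<phi> (t mod int n) = \<phi> t" if "\<And>t. \<phi> (t + int n) = \<phi> t" for \<phi> :: "int \<Rightarrow> complex" and t
  proof -
    interpret periodic_fun_simple \<phi> "int n"
      by standard (rule that)
    show ?thesis
      using minus_of_int[of t "t div int n"] by (simp add: minus_div_mult_eq_mod)
  qed
  from assms show ?thesis
    unfolding per_grid_def
    using periodic[where \<phi> = "\<lambda>t. f t (x2 mod int n) (x3 mod int n)"]
      periodic[where \<phi> = "\<lambda>t. f x1 t (x3 mod int n)"] periodic[where \<phi> = "\<lambda>t. f x1 x2 t"]
    by simp
qed

definition has_fourier_coeffs :: "nat \<Rightarrow> grid_fun \<Rightarrow> (int \<times> int \<times> int \<Rightarrow> complex) \<Rightarrow> bool" where
  "has_fourier_coeffs n u c \<longleftrightarrow>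
     (\<forall>x1 x2 x3. u x1 x2 x3 = (\<Sum>k\<in>index_cube n. c k * plane_wave n k (x1, x2, x3)))"

(* Any period cell would do for a periodic f; on this one mod3 is the identity. *)
definition dft :: "nat \<Rightarrow> grid_fun \<Rightarrow> int \<times> int \<times> int \<Rightarrow> complex" where
  "dft n f k =
     (\<Sum>(y1, y2, y3)\<in>index_cube n. f y1 y2 y3 * cnj (plane_wave n k (y1, y2, y3))) / of_nat n ^ 3"

lemma has_fourier_coeffs_dft:
  assumes n: "0 < n" and f: "per_grid n f"
  shows "has_fourier_coeffs n f (dft n f)"
  unfolding has_fourier_coeffs_def
proof (intro allI)
  fix x1 x2 x3 :: int
  let ?x = "(x1, x2, x3)"
  have "(\<Sum>k\<in>index_cube n. dft n f k * plane_wave n k ?x)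
      = (\<Sum>(y1, y2, y3)\<in>index_cube n. f y1 y2 y3 *
          (\<Sum>k\<in>index_cube n. cnj (plane_wave n k (y1, y2, y3)) * plane_wave n k ?x)) / of_nat n ^ 3"
    unfolding dft_def
    by (simp add: case_prod_unfold sum_divide_distrib sum_distrib_left sum_distrib_right mult.assoc)
      (subst sum.swap, simp add: mult_ac)
  also have "\<dots> =
      (\<Sum>y\<in>index_cube n. if y = mod3 n ?x then f x1 x2 x3 * of_nat n ^ 3 else 0) / of_nat n ^ 3"
  proof -
    have "(\<Sum>k\<in>index_cube n. cnj (plane_wave n k y) * plane_wave n k ?x)
        = (if y = mod3 n ?x then of_nat n ^ 3 else 0)" if y: "y \<in> index_cube n" for y
    proof -
      have "(\<Sum>k\<in>index_cube n. cnj (plane_wave n k y) * plane_wave n k ?x)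
          = (\<Sum>k\<in>index_cube n. plane_wave n (?x - y) k)"
        by (intro sum.cong refl) (metis cnj_plane_wave_mult plane_wave_commute)
      also have "\<dots> = (if mod3 n ?x = mod3 n y then of_nat n ^ 3 else 0)"
        using sum_plane_wave_diff[OF n, where a = 0 and k = ?x and l = y] by simp
      finally show ?thesis
        using mod3_eq_self[OF y] by auto
    qed
    then show ?thesis
      by (intro arg_cong[where f = "\<lambda>s. s / _"] sum.cong)
        (auto simp: per_grid_mod[OF f] split: if_splits)
  qed
  also have "\<dots> = f x1 x2 x3"
    using n mod3_in_index_cube[OF n, of ?x] by simp
  finally show "f x1 x2 x3 = (\<Sum>k\<in>index_cube n. dft n f k * plane_wave n k ?x)" ..
qed

lemma grid_norm2_eq_L2_set:
  assumes n: "0 < n" and u: "has_fourier_coeffs n u c"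
  shows "grid_norm2 n u = L2_set (\<lambda>k. cmod (c k)) (index_cube n)"
proof -
  let ?G = "{1..int n} \<times> {1..int n} \<times> {1..int n}"
  have orthogonal:
    "(\<Sum>x\<in>?G. cnj (plane_wave n k x) * plane_wave n l x) = (if l = k then of_nat n ^ 3 else 0)"
    if "k \<in> index_cube n" "l \<in> index_cube n" for k l
    using sum_plane_wave_diff[OF n, where a = 1 and k = l and l = k] that
    by (simp add: cnj_plane_wave_mult mod3_eq_self)
  have "(\<Sum>(x1, x2, x3)\<in>?G. cnj (u x1 x2 x3) * u x1 x2 x3)
      = (\<Sum>x\<in>?G. \<Sum>l\<in>index_cube n. \<Sum>k\<in>index_cube n.
           cnj (c k) * c l * (cnj (plane_wave n k x) * plane_wave n l x))"
    using u unfolding has_fourier_coeffs_def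
    by (simp add: case_prod_unfold sum_product mult_ac)
  also have "\<dots> = (\<Sum>l\<in>index_cube n. \<Sum>k\<in>index_cube n.
           cnj (c k) * c l * (\<Sum>x\<in>?G. cnj (plane_wave n k x) * plane_wave n l x))"
    by (subst sum.swap[where A = ?G])
      (rule sum.cong[OF refl], subst sum.swap[where A = ?G], simp add: sum_distrib_left)
  also have "\<dots> = (\<Sum>l\<in>index_cube n. cnj (c l) * c l * of_nat n ^ 3)"
    by (intro sum.cong refl) (simp add: orthogonal if_distrib sum.delta cong: if_cong)
  also have "\<dots> = of_nat n ^ 3 * of_real (\<Sum>l\<in>index_cube n. (cmod (c l))\<^sup>2)"
    by (simp add: sum_distrib_left complex_norm_square mult_ac del: of_real_power)
  finally have "grid_inner n u u = of_real (\<Sum>k\<in>index_cube n. (cmod (c k))\<^sup>2)"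
    using n by (simp add: grid_inner_def grid_h_def sum.cartesian_product power_divide)
  then show ?thesis
    by (simp add: grid_norm2_def L2_set_def)
qed

section \<open>The symbol of the discrete Laplacian\<close>

definition lap_symbol1 :: "nat \<Rightarrow> int \<Rightarrow> real" where
  "lap_symbol1 n t = 4 * (real n)\<^sup>2 * (sin (pi * of_int t / real n))\<^sup>2"

fun lap_symbol :: "nat \<Rightarrow> int \<times> int \<times> int \<Rightarrow> real" where
  "lap_symbol n (k1, k2, k3) = lap_symbol1 n k1 + lap_symbol1 n k2 + lap_symbol1 n k3"

lemma lap_symbol1_nonneg: "0 \<le> lap_symbol1 n t"
  by (simp add: lap_symbol1_def)

lemma lap_symbol_nonneg: "0 \<le> lap_symbol n k"
  by (cases k) (simp add: lap_symbol1_nonneg add_nonneg_nonneg)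

lemma wave_second_difference:
  "of_real ((real n)\<^sup>2) * (wave n k (x + 1) + wave n k (x - 1) - 2 * wave n k x)
     = - of_real (lap_symbol1 n k) * wave n k x"
proof -
  define \<theta> where "\<theta> = pi * of_int k / real n"
  have "wave n k 1 + wave n k (- 1) = cis (2 * \<theta>) + cis (- (2 * \<theta>))"
    by (simp add: wave_def \<theta>_def mult.assoc)
  also have "\<dots> = of_real (2 - 4 * (sin \<theta>)\<^sup>2)"
    by (simp add: complex_eq_iff cos_double_sin)
  finally have pair: "wave n k 1 + wave n k (- 1) = of_real (2 - 4 * (sin \<theta>)\<^sup>2)" .
  have "wave n k (x + 1) = wave n k x * wave n k 1" "wave n k (x - 1) = wave n k x * wave n k (- 1)"
    by (simp_all add: wave_mult_point)
  then have "wave n k (x + 1) + wave n k (x - 1) - 2 * wave n k x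
      = wave n k x * (wave n k 1 + wave n k (- 1) - 2)"
    by (simp add: algebra_simps)
  also have "\<dots> = wave n k x * of_real (- 4 * (sin \<theta>)\<^sup>2)"
    by (simp only: pair) simp
  finally show ?thesis
    by (simp add: lap_symbol1_def \<theta>_def)
qed

lemma lap_h_plane_wave:
  "lap_h n (\<lambda>y1 y2 y3. plane_wave n k (y1, y2, y3)) x1 x2 x3
     = - of_real (lap_symbol n k) * plane_wave n k (x1, x2, x3)"
proof -
  obtain k1 k2 k3 where k: "k = (k1, k2, k3)" by (cases k)
  define D where
    "D j x = of_real ((real n)\<^sup>2) * (wave n j (x + 1) + wave n j (x - 1) - 2 * wave n j x)" for j x
  have "lap_h n (\<lambda>y1 y2 y3. plane_wave n k (y1, y2, y3)) x1 x2 x3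
      = D k1 x1 * wave n k2 x2 * wave n k3 x3 + wave n k1 x1 * D k2 x2 * wave n k3 x3
        + wave n k1 x1 * wave n k2 x2 * D k3 x3"
    unfolding lap_h_def grid_h_def D_def k by (simp add: power_one_over algebra_simps)
  then show ?thesis
    by (simp only: D_def wave_second_difference) (simp add: k algebra_simps)
qed

lemma has_fourier_coeffs_lap_h:
  assumes u: "has_fourier_coeffs n u c"
  shows "has_fourier_coeffs n (lap_h n u) (\<lambda>k. - of_real (lap_symbol n k) * c k)"
  unfolding has_fourier_coeffs_def
proof (intro allI)
  fix x1 x2 x3 :: int
  have "lap_h n u x1 x2 x3
      = (\<Sum>k\<in>index_cube n. c k * lap_h n (\<lambda>y1 y2 y3. plane_wave n k (y1, y2, y3)) x1 x2 x3)"
    using u unfolding has_fourier_coeffs_def lap_h_def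
    by (simp add: sum.distrib sum_subtractf sum_distrib_left algebra_simps)
  then show "lap_h n u x1 x2 x3
      = (\<Sum>k\<in>index_cube n. (- of_real (lap_symbol n k) * c k) * plane_wave n k (x1, x2, x3))"
    by (simp add: lap_h_plane_wave mult_ac)
qed

lemma grid_norm2_lap_h_eq_L2_set:
  assumes "0 < n" and "has_fourier_coeffs n u c"
  shows "grid_norm2 n (lap_h n u) = L2_set (\<lambda>k. lap_symbol n k * cmod (c k)) (index_cube n)"
  by (simp add: grid_norm2_eq_L2_set[OF assms(1) has_fourier_coeffs_lap_h[OF assms(2)]]
      norm_mult lap_symbol_nonneg)

lemma has_fourier_coeffs_mult:
  assumes n: "0 < n" and f: "has_fourier_coeffs n f a" and g: "has_fourier_coeffs n g b"
  shows "has_fourier_coeffs n (\<lambda>x1 x2 x3. f x1 x2 x3 * g x1 x2 x3)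
           (\<lambda>m. \<Sum>k\<in>index_cube n. a k * b (mod3 n (m - k)))"
  unfolding has_fourier_coeffs_def
proof (intro allI)
  interpret convolution_index "index_cube n" "\<lambda>m k. mod3 n (m - k)"
    by (rule convolution_index_mod3[OF n])
  fix x1 x2 x3 :: int
  let ?x = "(x1, x2, x3)"
  have "f x1 x2 x3 * g x1 x2 x3
      = (\<Sum>k\<in>index_cube n. \<Sum>l\<in>index_cube n. a k * b l * (plane_wave n k ?x * plane_wave n l ?x))"
    using f g unfolding has_fourier_coeffs_def by (simp add: sum_product mult_ac)
  also have "\<dots> = (\<Sum>k\<in>index_cube n. \<Sum>m\<in>index_cube n.
      a k * b (mod3 n (m - k)) * (plane_wave n k ?x * plane_wave n (mod3 n (m - k)) ?x))"
  proof (rule sum.cong[OF refl])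
    fix k assume "k \<in> index_cube n"
    then show "(\<Sum>l\<in>index_cube n. a k * b l * (plane_wave n k ?x * plane_wave n l ?x))
      = (\<Sum>m\<in>index_cube n.
          a k * b (mod3 n (m - k)) * (plane_wave n k ?x * plane_wave n (mod3 n (m - k)) ?x))"
      using sum_reflect_left[of k "\<lambda>l. a k * b l * (plane_wave n k ?x * plane_wave n l ?x)"] by simp
  qed
  also have "\<dots> = (\<Sum>k\<in>index_cube n. \<Sum>m\<in>index_cube n. a k * b (mod3 n (m - k)) * plane_wave n m ?x)"
    by (simp add: plane_wave_mod3[OF n] plane_wave_mult)
  also have "\<dots> = (\<Sum>m\<in>index_cube n. (\<Sum>k\<in>index_cube n. a k * b (mod3 n (m - k))) * plane_wave n m ?x)"
    by (subst sum.swap) (simp add: sum_distrib_right)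
  finally show "f x1 x2 x3 * g x1 x2 x3
      = (\<Sum>m\<in>index_cube n. (\<Sum>k\<in>index_cube n. a k * b (mod3 n (m - k))) * plane_wave n m ?x)" .
qed

lemma sin_sq_plus_int_pi: "(sin (x + of_int q * pi))\<^sup>2 = (sin x)\<^sup>2"
proof -
  interpret periodic_fun_simple "\<lambda>x::real. (sin x)\<^sup>2" pi
    by standard simp
  show ?thesis
    by (rule plus_of_int)
qed

lemma sin_sq_add_le:
  fixes x y :: real
  shows "(sin (x + y))\<^sup>2 \<le> 2 * (sin x)\<^sup>2 + 2 * (sin y)\<^sup>2"
proof -
  have "\<bar>sin x * cos y\<bar> \<le> \<bar>sin x\<bar>" "\<bar>cos x * sin y\<bar> \<le> \<bar>sin y\<bar>"
    unfolding abs_mult by (auto intro: mult_right_le_one_le mult_left_le_one_le simp: abs_cos_le_one)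
  then have "\<bar>sin (x + y)\<bar> \<le> \<bar>sin x\<bar> + \<bar>sin y\<bar>"
    unfolding sin_add by linarith
  then have "(sin (x + y))\<^sup>2 \<le> (\<bar>sin x\<bar> + \<bar>sin y\<bar>)\<^sup>2"
    by (metis abs_ge_zero power2_abs power_mono)
  also have "\<dots> \<le> 2 * (sin x)\<^sup>2 + 2 * (sin y)\<^sup>2"
    using sum_squares_bound[of "\<bar>sin x\<bar>" "\<bar>sin y\<bar>"] by (simp add: power2_sum)
  finally show ?thesis .
qed

lemma lap_symbol1_mod:
  assumes n: "0 < n"
  shows "lap_symbol1 n (t mod int n) = lap_symbol1 n t"
proof -
  have "real_of_int (t mod int n) = of_int t - real n * of_int (t div int n)"
    unfolding minus_mult_div_eq_mod[symmetric] by simp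
  then have "pi * of_int (t mod int n) / real n
      = pi * (of_int t - real n * of_int (t div int n)) / real n"
    by simp
  also have "\<dots> = pi * of_int t / real n + of_int (- (t div int n)) * pi"
    using n by (simp add: field_simps)
  finally show ?thesis
    unfolding lap_symbol1_def
    using sin_sq_plus_int_pi[of "pi * of_int t / real n" "- (t div int n)"] by simp
qed

lemma lap_symbol1_add_le: "lap_symbol1 n (s + t) \<le> 2 * lap_symbol1 n s + 2 * lap_symbol1 n t"
proof -
  have "(sin (pi * of_int (s + t) / real n))\<^sup>2
      \<le> 2 * (sin (pi * of_int s / real n))\<^sup>2 + 2 * (sin (pi * of_int t / real n))\<^sup>2"
    using sin_sq_add_le[of "pi * of_int s / real n" "pi * of_int t / real n"]
    by (simp add: distrib_left add_divide_distrib)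
  from mult_left_mono[OF this, of "4 * (real n)\<^sup>2"] show ?thesis
    by (simp add: lap_symbol1_def algebra_simps)
qed

lemma lap_symbol_reflect_le:
  assumes n: "0 < n"
  shows "lap_symbol n m \<le> 2 * lap_symbol n k + 2 * lap_symbol n (mod3 n (m - k))"
proof -
  have component:
    "lap_symbol1 n a \<le> 2 * lap_symbol1 n b + 2 * lap_symbol1 n ((a - b) mod int n)" for a b
    using lap_symbol1_add_le[of n b "a - b"] by (simp add: lap_symbol1_mod[OF n])
  obtain m1 m2 m3 k1 k2 k3 where "m = (m1, m2, m3)" "k = (k1, k2, k3)"
    by (cases m; cases k)
  then show ?thesis
    using component[of m1 k1] component[of m2 k2] component[of m3 k3] by simp
qed

section \<open>A bound on the symbol uniform in the grid size\<close>

lemma sin_ge_third: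
  fixes x :: real
  assumes "0 \<le> x" "x \<le> 2"
  shows "x / 3 \<le> sin x"
proof -
  have "\<bar>sin x - (\<Sum>m<3. sin_coeff m * x ^ m)\<bar> \<le> inverse (fact 3) * \<bar>x\<bar> ^ 3"
    by (rule Maclaurin_sin_bound)
  moreover have "(\<Sum>m<3. sin_coeff m * x ^ m) = x"
    by (simp add: eval_nat_numeral sin_coeff_def)
  ultimately have "x - x ^ 3 / 6 \<le> sin x"
    using assms by (simp add: eval_nat_numeral abs_if split: if_splits)
  moreover have "x ^ 3 \<le> 4 * x"
  proof -
    have "x * x \<le> 2 * 2"
      using assms by (intro mult_mono) auto
    then show ?thesis
      using mult_left_mono[of "x * x" 4 x] assms by (simp add: power3_eq_cube mult_ac)
  qed
  ultimately show ?thesis by simp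
qed

lemma lap_symbol1_lower_bound:
  assumes n: "0 < n" and t: "0 \<le> t" "2 * t \<le> int n"
  shows "4 * (of_int t)\<^sup>2 \<le> lap_symbol1 n t"
proof -
  define \<theta> where "\<theta> = pi * of_int t / real n"
  have "0 \<le> \<theta>"
    using t by (simp add: \<theta>_def)
  moreover have "\<theta> \<le> pi / 2"
  proof -
    have "pi * (2 * of_int t) \<le> pi * real n"
      by (intro mult_left_mono) (use t(2) pi_ge_zero in linarith)+
    then show ?thesis
      using n by (simp add: \<theta>_def field_simps)
  qed
  ultimately have "\<theta> / 3 \<le> sin \<theta>"
    using pi_less_4 by (intro sin_ge_third) auto
  have "3 * of_int t \<le> pi * of_int t"
    using pi_gt3 t by (intro mult_right_mono) auto
  then have "of_int t / real n \<le> \<theta> / 3"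
    using n by (simp add: \<theta>_def field_simps)
  also note \<open>\<theta> / 3 \<le> sin \<theta>\<close>
  finally have "(of_int t / real n)\<^sup>2 \<le> (sin \<theta>)\<^sup>2"
    using t by (intro power_mono) auto
  from mult_left_mono[OF this, of "4 * (real n)\<^sup>2"] show ?thesis
    using n by (simp add: lap_symbol1_def \<theta>_def power_divide)
qed

lemma lap_symbol1_reflect: "0 < n \<Longrightarrow> lap_symbol1 n (int n - t) = lap_symbol1 n t"
  by (simp add: lap_symbol1_def diff_divide_distrib right_diff_distrib)

lemma summable_one_plus_sq_powr: "summable (\<lambda>j::nat. (1 + (real j)\<^sup>2) powr (- (2 / 3)))"
proof (rule summable_comparison_test'[where N = 1])
  show "summable (\<lambda>j::nat. real j powr (- (4 / 3)))"
    by (simp add: summable_real_powr_iff)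
  fix j :: nat
  assume "1 \<le> j"
  then have "(1 + (real j)\<^sup>2) powr (- (2 / 3)) \<le> ((real j)\<^sup>2) powr (- (2 / 3))"
    by (intro powr_mono2') auto
  also have "\<dots> = (real j powr 2) powr (- (2 / 3))"
    using \<open>1 \<le> j\<close> by (simp add: powr_realpow)
  also have "\<dots> = real j powr (- (4 / 3))"
    unfolding powr_powr by simp
  finally show "norm ((1 + (real j)\<^sup>2) powr (- (2 / 3))) \<le> real j powr (- (4 / 3))"
    by simp
qed

lemma sum_one_plus_lap_symbol1_powr_le:
  assumes n: "0 < n"
  shows "(\<Sum>t\<in>{0..int n - 1}. (1 + lap_symbol1 n t) powr (- (2 / 3)))
    \<le> 2 * (\<Sum>j. (1 + (real j)\<^sup>2) powr (- (2 / 3)))"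
proof -
  define g where "g = (\<lambda>j::nat. (1 + (real j)\<^sup>2) powr (- (2 / 3)))"
  have g_nonneg: "0 \<le> g j" for j
    by (simp add: g_def)
  have le_g: "(1 + lap_symbol1 n t) powr (- (2 / 3)) \<le> g (nat m)"
    if "0 \<le> m" "2 * m \<le> int n" "lap_symbol1 n t = lap_symbol1 n m" for t m
  proof -
    have "(real (nat m))\<^sup>2 \<le> 4 * (of_int m)\<^sup>2"
      using that(1) by simp
    then have "1 + (real (nat m))\<^sup>2 \<le> 1 + lap_symbol1 n t"
      using lap_symbol1_lower_bound[OF n that(1,2)] that(3) by linarith
    then show ?thesis
      unfolding g_def by (intro powr_mono2') (auto intro: add_pos_nonneg)
  qed
  \<comment> \<open>Fold t onto min t (n - t), where the lower bound on the symbol applies.\<close>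
  have pointwise: "(1 + lap_symbol1 n t) powr (- (2 / 3)) \<le> g (nat t) + g (nat (int n - t))"
    if "t \<in> {0..int n - 1}" for t
  proof (cases "2 * t \<le> int n")
    case True
    with that le_g[of t t] g_nonneg[of "nat (int n - t)"] show ?thesis by auto
  next
    case False
    with that le_g[of "int n - t" t] g_nonneg[of "nat t"] lap_symbol1_reflect[OF n, of t]
    show ?thesis by auto
  qed
  have "(\<Sum>t\<in>{0..int n - 1}. (1 + lap_symbol1 n t) powr (- (2 / 3)))
      \<le> (\<Sum>t\<in>{0..int n - 1}. g (nat t) + g (nat (int n - t)))"
    by (rule sum_mono) (rule pointwise)
  also have "\<dots> = sum g (nat ` {0..int n - 1}) + sum g ((\<lambda>t. nat (int n - t)) ` {0..int n - 1})"
    unfolding sum.distrib by (subst (1 2) sum.reindex) (auto simp: inj_on_def)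
  also have "\<dots> \<le> suminf g + suminf g"
    using summable_one_plus_sq_powr g_nonneg
    by (intro add_mono sum_le_suminf) (simp_all add: g_def)
  finally show ?thesis
    by (simp add: g_def)
qed

(* Splitting the exponent 2 into three exponents 2/3 bounds the sum over the cube by the cube of
   a one-dimensional sum, which converges because 4/3 > 1. *)
lemma inverse_square_le_powr_prod:
  fixes p q r :: real
  assumes "0 \<le> p" "0 \<le> q" "0 \<le> r"
  shows "(1 / (1 + (p + q + r)))\<^sup>2
    \<le> (1 + p) powr (- (2 / 3)) * (1 + q) powr (- (2 / 3)) * (1 + r) powr (- (2 / 3))"
proof -
  define S where "S = 1 + (p + q + r)"
  have "1 \<le> S"
    using assms by (simp add: S_def)
  have "S powr (- (2 / 3)) * S powr (- (2 / 3)) * S powr (- (2 / 3))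
      \<le> (1 + p) powr (- (2 / 3)) * (1 + q) powr (- (2 / 3)) * (1 + r) powr (- (2 / 3))"
    using assms by (intro mult_mono powr_mono2') (auto simp: S_def)
  moreover have "S powr (- (2 / 3)) * S powr (- (2 / 3)) * S powr (- (2 / 3)) = (1 / S)\<^sup>2"
    using \<open>1 \<le> S\<close> by (simp add: powr_add[symmetric] powr_minus_divide powr_realpow power_one_over)
  ultimately show ?thesis
    by (simp add: S_def)
qed

lemma L2_set_inverse_one_plus_lap_symbol_bounded:
  "\<exists>B>0. \<forall>n>0. L2_set (\<lambda>k. 1 / (1 + lap_symbol n k)) (index_cube n) \<le> B"
proof (intro exI conjI allI impI)
  define G where "G = 2 * (\<Sum>j. (1 + (real j)\<^sup>2) powr (- (2 / 3)))"
  have "0 < G"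
    unfolding G_def
    by (intro mult_pos_pos suminf_pos summable_one_plus_sq_powr) (auto simp: add_nonneg_eq_0_iff)
  then show "0 < sqrt (G ^ 3)"
    by simp
  fix n :: nat
  assume n: "0 < n"
  define h where "h t = (1 + lap_symbol1 n t) powr (- (2 / 3))" for t
  have "(\<Sum>k\<in>index_cube n. (1 / (1 + lap_symbol n k))\<^sup>2)
      \<le> (\<Sum>(k1, k2, k3)\<in>index_cube n. h k1 * h k2 * h k3)"
    by (intro sum_mono) (auto simp: h_def lap_symbol1_nonneg intro!: inverse_square_le_powr_prod)
  also have "\<dots> = sum h {0..int n - 1} ^ 3"
    by (simp add: sum_product3 power3_eq_cube)
  also have "\<dots> \<le> G ^ 3"
    unfolding h_def G_def
    by (intro power_mono sum_one_plus_lap_symbol1_powr_le[OF n] sum_nonneg) simp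
  finally show "L2_set (\<lambda>k. 1 / (1 + lap_symbol n k)) (index_cube n) \<le> sqrt (G ^ 3)"
    unfolding L2_set_def by (rule real_sqrt_le_mono)
qed

theorem proposition4p2:
  shows "\<exists>C::real. C > 0 \<and> (\<forall>N::nat. N \<ge> 1 \<longrightarrow> (\<forall>f g. per_grid N f \<longrightarrow> per_grid N g \<longrightarrow>
     grid_norm2 N (lap_h N (\<lambda>i j k. f i j k * g i j k))
       \<le> C * (grid_norm2 N f + grid_norm2 N (lap_h N f)) * (grid_norm2 N g + grid_norm2 N (lap_h N g))))"
proof -
  obtain B where B: "0 < B"
    and bound: "\<And>n. 0 < n \<Longrightarrow> L2_set (\<lambda>k. 1 / (1 + lap_symbol n k)) (index_cube n) \<le> B"
    using L2_set_inverse_one_plus_lap_symbol_bounded by blast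
  have "grid_norm2 N (lap_h N (\<lambda>i j k. f i j k * g i j k))
      \<le> 4 * B * (grid_norm2 N f + grid_norm2 N (lap_h N f))
              * (grid_norm2 N g + grid_norm2 N (lap_h N g))"
    if "N \<ge> 1" "per_grid N f" "per_grid N g" for N f g
  proof -
    from \<open>N \<ge> 1\<close> have N: "0 < N" by simp
    interpret convolution_index "index_cube N" "\<lambda>m k. mod3 N (m - k)"
      by (rule convolution_index_mod3[OF N])
    have f: "has_fourier_coeffs N f (dft N f)" and g: "has_fourier_coeffs N g (dft N g)"
      using has_fourier_coeffs_dft N that by blast+
    show ?thesis
      unfolding grid_norm2_lap_h_eq_L2_set[OF N has_fourier_coeffs_mult[OF N f g]]
        grid_norm2_eq_L2_set[OF N f] grid_norm2_eq_L2_set[OF N g]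
        grid_norm2_lap_h_eq_L2_set[OF N f] grid_norm2_lap_h_eq_L2_set[OF N g]
      by (rule L2_set_weighted_convolution_le_product
          [OF lap_symbol_nonneg lap_symbol_reflect_le[OF N] bound[OF N]])
  qed
  with B show ?thesis
    by (intro exI[of _ "4 * B"]) auto
qed

end
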